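(* For every $(x_n)\in\ell_1^{*}$ there exists an ideal $I$ on $\mathbb{N}$ with $\mathrm{Fin}\subseteq I$ and $I\neq\mathrm{Fin}$ such that $A_I(x_n)$ is meager and has Lebesgue measure zero.
   Context: $\ell_1^{*}=\{(x_n)\in\ell_1 : x_n\neq 0\text{ for every }n\}$. An ideal on $\mathbb{N}$ is a family $I\subseteq P(\mathbb{N})$ closed under finite unions and subsets with $\mathbb{N}\notin I$; $\mathrm{Fin}$ is the ideal of finite sets. $A_I(x_n)=\{\sum_{n\in A}x_n : A\in I\}$. *)

theory Defs
  imports "HOL-Analysis.Analysis"
begin

definition nowhere_dense :: "real set \<Rightarrow> bool" where
  "nowhere_dense S \<longleftrightarrow> interior (closure S) = {}"

definition meager :: "real set \<Rightarrow> bool" where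
  "meager S \<longleftrightarrow> (\<exists>F. countable F \<and> (\<forall>T\<in>F. nowhere_dense T) \<and> S \<subseteq> \<Union>F)"

definition is_ideal :: "nat set set \<Rightarrow> bool" where
  "is_ideal I \<longleftrightarrow> (\<forall>A\<in>I. \<forall>B\<in>I. A \<union> B \<in> I) \<and> (\<forall>A\<in>I. \<forall>B. B \<subseteq> A \<longrightarrow> B \<in> I)
     \<and> UNIV \<notin> I"

definition Fin :: "nat set set" where
  "Fin = {A. finite A}"

definition l1_star :: "(nat \<Rightarrow> real) set" where
  "l1_star = {x. summable (\<lambda>n. \<bar>x n\<bar>) \<and> (\<forall>n. x n \<noteq> 0)}"

definition A_I :: "nat set set \<Rightarrow> (nat \<Rightarrow> real) \<Rightarrow> real set" where
  "A_I I x = {(\<Sum>\<^sub>\<infinity>n\<in>A. x n) | A. A \<in> I}"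

end

theory Submission
  imports Defs
begin

text \<open>Choose an infinite set \<open>M = {m 0 < m 1 < \<dots>}\<close> of even numbers so sparse that every
  subsum of \<open>x\<close> over indices \<open>\<ge> m k\<close> is at most \<open>4\<^sup>-\<^sup>k\<close> in absolute value, and let \<open>I\<close> be the
  ideal of sets contained in \<open>M\<close> up to finitely many elements (proper, since \<open>M\<close> misses the odd
  numbers). For every \<open>k\<close>, the subsums of \<open>x\<close> over subsets of \<open>M\<close> lie within \<open>4\<^sup>-\<^sup>k\<close> of the \<open>2\<^sup>k\<close>
  sums over subsets of \<open>{m 0, \<dots>, m (k - 1)}\<close>, so their closure \<open>E\<close> is null, hence nowhere dense.
  Every element of \<open>A_I I x\<close> is a finite subsum plus an element of \<open>E\<close>, so \<open>A_I I x\<close> lies in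
  countably many translates of \<open>E\<close>.\<close>

lemma negligible_closure_if_small_covers:
  fixes S :: "real set"
  assumes "\<And>e. e > 0 \<Longrightarrow> \<exists>P r. finite P \<and> 0 \<le> r \<and> real (card P) * (2 * r) \<le> e
             \<and> S \<subseteq> (\<Union>p\<in>P. cball p r)"
  shows "negligible (closure S)"
proof (subst negligible_outer_le, intro allI impI)
  fix e :: real
  assume "e > 0"
  then obtain P r where P: "finite P" "0 \<le> r" "real (card P) * (2 * r) \<le> e"
    and S: "S \<subseteq> (\<Union>p\<in>P. cball p r)"
    using assms by blast
  define T where "T = (\<Union>p\<in>P. cball p r)"
  have "closure S \<subseteq> T"
    using S \<open>finite P\<close> unfolding T_def by (intro closure_minimal closed_UN) auto
  moreover have "T \<in> lmeasurable"
    unfolding T_def using \<open>finite P\<close> by (intro fmeasurable.finite_UN) auto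
  moreover have "measure lebesgue T \<le> e"
  proof -
    have "measure lebesgue T \<le> (\<Sum>p\<in>P. measure lebesgue (cball p r))"
      unfolding T_def using \<open>finite P\<close> by (intro measure_UNION_le) auto
    also have "\<dots> = real (card P) * (2 * r)"
      using \<open>0 \<le> r\<close> by (simp add: cball_eq_atLeastAtMost)
    finally show ?thesis
      using P(3) by linarith
  qed
  ultimately show "\<exists>T. closure S \<subseteq> T \<and> T \<in> lmeasurable \<and> measure lebesgue T \<le> e"
    by blast
qed

lemma nowhere_dense_if_negligible_closure:
  assumes "negligible (closure S)"
  shows "nowhere_dense S"
proof -
  have "negligible (interior (closure S))"
    using assms interior_subset by (rule negligible_subset)
  then show ?thesis
    unfolding nowhere_dense_def using open_not_negligible open_interior by blast
qed

lemma meager_negligible_if_countable_cover: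
  assumes "countable F" "\<And>T. T \<in> F \<Longrightarrow> negligible (closure T)" "S \<subseteq> \<Union>F"
  shows "meager S" "negligible S"
proof -
  show "meager S"
    unfolding meager_def using assms nowhere_dense_if_negligible_closure by blast
  have "negligible (\<Union>(closure ` F))"
    using assms(1,2) by (intro negligible_countable_Union) auto
  moreover have "S \<subseteq> \<Union>(closure ` F)"
    using assms(3) closure_subset by blast
  ultimately show "negligible S"
    by (rule negligible_subset)
qed

lemma abs_summable_imp_summable_on:
  fixes x :: "nat \<Rightarrow> real"
  assumes "summable (\<lambda>n. \<bar>x n\<bar>)"
  shows "x summable_on A"
  using norm_summable_imp_summable_on[of x] assms
  by (auto intro: summable_on_subset_banach)

lemma abs_infsum_le_suminf_tail:
  fixes x :: "nat \<Rightarrow> real"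
  assumes "summable (\<lambda>n. \<bar>x n\<bar>)" "A \<subseteq> {N..}"
  shows "\<bar>infsum x A\<bar> \<le> (\<Sum>i. \<bar>x (i + N)\<bar>)"
proof -
  have summable: "(\<lambda>n. \<bar>x n\<bar>) summable_on A"
    using assms(1) by (intro abs_summable_imp_summable_on) simp
  have "\<bar>infsum x A\<bar> \<le> (\<Sum>\<^sub>\<infinity>n\<in>A. \<bar>x n\<bar>)"
    using norm_infsum_bound[of x A] summable by simp
  also have "\<dots> \<le> (\<Sum>i. \<bar>x (i + N)\<bar>)"
  proof (rule infsum_le_finite_sums[OF summable])
    fix F
    assume F: "finite F" "F \<subseteq> A"
    have "F \<subseteq> {N..}"
      using F(2) assms(2) by blast
    then have "(\<Sum>n\<in>F. \<bar>x n\<bar>) = (\<Sum>i\<in>(\<lambda>n. n - N) ` F. \<bar>x (i + N)\<bar>)"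
      by (subst sum.reindex[OF inj_on_diff_nat]) (auto simp: subset_eq intro!: sum.cong)
    also have "\<dots> \<le> (\<Sum>i. \<bar>x (i + N)\<bar>)"
      using F(1) summable_ignore_initial_segment[OF assms(1)] by (intro sum_le_suminf) auto
    finally show "(\<Sum>n\<in>F. \<bar>x n\<bar>) \<le> (\<Sum>i. \<bar>x (i + N)\<bar>)" .
  qed
  finally show ?thesis .
qed

lemma small_infsum_beyond:
  fixes x :: "nat \<Rightarrow> real"
  assumes "summable (\<lambda>n. \<bar>x n\<bar>)" "r > 0"
  shows "\<exists>N. \<forall>A \<subseteq> {N..}. \<bar>infsum x A\<bar> \<le> r"
proof -
  obtain N where "norm (\<Sum>i. \<bar>x (i + N)\<bar>) < r"
    using suminf_exist_split[OF assms(2,1)] by blast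
  then have tail: "(\<Sum>i. \<bar>x (i + N)\<bar>) \<le> r"
    by simp
  show ?thesis
  proof (intro exI allI impI)
    fix A
    assume "A \<subseteq> {N..}"
    then show "\<bar>infsum x A\<bar> \<le> r"
      using abs_infsum_le_suminf_tail[OF assms(1)] tail by (meson order_trans)
  qed
qed

lemma infsum_split_cofinite:
  fixes x :: "nat \<Rightarrow> real"
  assumes "summable (\<lambda>n. \<bar>x n\<bar>)" "finite (A - M)"
  shows "infsum x A = sum x (A - M) + infsum x (A \<inter> M)"
proof -
  have "infsum x ((A - M) \<union> (A \<inter> M)) = infsum x (A - M) + infsum x (A \<inter> M)"
    using assms(1) by (intro infsum_Un_disjoint abs_summable_imp_summable_on) auto
  then have "infsum x A = infsum x (A - M) + infsum x (A \<inter> M)"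
    by (simp add: Un_Diff_Int)
  then show ?thesis
    using assms(2) by simp
qed

lemma strict_mono_even_majorant:
  fixes N :: "nat \<Rightarrow> nat"
  obtains m where "strict_mono m" "\<And>k. N k \<le> m k" "\<And>k. even (m k)"
proof
  let ?m = "\<lambda>k. 2 * (\<Sum>i\<le>k. Suc (N i))"
  show "strict_mono ?m"
    by (simp add: strict_mono_Suc_iff)
  show "N k \<le> ?m k" for k
    using member_le_sum[of k "{..k}" "\<lambda>i. Suc (N i)"] by simp
  show "even (?m k)" for k
    by simp
qed

lemma subsums_finite_cover:
  fixes x :: "nat \<Rightarrow> real" and m :: "nat \<Rightarrow> nat"
  assumes "summable (\<lambda>n. \<bar>x n\<bar>)" "strict_mono m"
    and tail: "\<And>A. A \<subseteq> {m k..} \<Longrightarrow> \<bar>infsum x A\<bar> \<le> r"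
  obtains P where "finite P" "card P \<le> 2 ^ k"
    "{infsum x B | B. B \<subseteq> range m} \<subseteq> (\<Union>p\<in>P. cball p r)"
proof -
  define K where "K = m ` {..<k}"
  define P where "P = sum x ` Pow K"
  have "finite K" "card K \<le> k"
    unfolding K_def using card_image_le[of "{..<k}" m] by auto
  then have "finite P"
    unfolding P_def by simp
  have "card P \<le> card (Pow K)"
    unfolding P_def using \<open>finite K\<close> by (intro card_image_le) simp
  also have "\<dots> \<le> 2 ^ k"
    using \<open>finite K\<close> \<open>card K \<le> k\<close> by (simp add: card_Pow power_increasing)
  finally have "card P \<le> 2 ^ k" .
  moreover have "{infsum x B | B. B \<subseteq> range m} \<subseteq> (\<Union>p\<in>P. cball p r)"
  proof clarify
    fix B
    assume B: "B \<subseteq> range m"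
    have "B - K \<subseteq> {m k..}"
    proof
      fix i
      assume "i \<in> B - K"
      then obtain j where "i = m j" "\<not> j < k"
        using B unfolding K_def by auto
      then show "i \<in> {m k..}"
        using strict_mono_less_eq[OF assms(2)] by simp
    qed
    then have "infsum x B \<in> cball (sum x (B \<inter> K)) r"
      using tail infsum_split_cofinite[OF assms(1), of B "- K"] \<open>finite K\<close>
      by (simp add: Diff_eq Int_commute dist_real_def)
    moreover have "sum x (B \<inter> K) \<in> P"
      unfolding P_def by blast
    ultimately show "infsum x B \<in> (\<Union>p\<in>P. cball p r)"
      by blast
  qed
  ultimately show thesis
    by (intro that[OF \<open>finite P\<close>])
qed

lemma negligible_closure_subsums:
  fixes x :: "nat \<Rightarrow> real" and m :: "nat \<Rightarrow> nat"
  assumes "summable (\<lambda>n. \<bar>x n\<bar>)" "strict_mono m"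
    and tail: "\<And>k A. A \<subseteq> {m k..} \<Longrightarrow> \<bar>infsum x A\<bar> \<le> (1/4) ^ k"
  shows "negligible (closure {infsum x B | B. B \<subseteq> range m})"
proof (rule negligible_closure_if_small_covers)
  fix e :: real
  assume "e > 0"
  then obtain k where k: "(1/2 :: real) ^ k < e / 2"
    using real_arch_pow_inv[of "e / 2" "1/2"] by auto
  obtain P where P: "finite P" "card P \<le> 2 ^ k"
    "{infsum x B | B. B \<subseteq> range m} \<subseteq> (\<Union>p\<in>P. cball p ((1/4) ^ k))"
    by (rule subsums_finite_cover[OF assms(1,2) tail])
  have "real (card P) \<le> 2 ^ k"
    using P(2) by (metis of_nat_le_iff of_nat_numeral of_nat_power)
  then have "real (card P) * (2 * (1/4) ^ k) \<le> 2 ^ k * (2 * (1/4) ^ k)"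
    by (rule mult_right_mono) simp
  also have "\<dots> = 2 * (1/2 :: real) ^ k"
    by (simp add: power_divide field_simps flip: power_mult_distrib)
  finally have "real (card P) * (2 * (1/4) ^ k) \<le> e"
    using k by linarith
  with P show "\<exists>P r. finite P \<and> 0 \<le> r \<and> real (card P) * (2 * r) \<le> e
      \<and> {infsum x B | B. B \<subseteq> range m} \<subseteq> (\<Union>p\<in>P. cball p r)"
    by (intro exI[of _ P] exI[of _ "(1/4) ^ k"]) auto
qed

lemma is_ideal_finite_modulo:
  "infinite (- M) \<Longrightarrow> is_ideal {A. finite (A - M)}"
  unfolding is_ideal_def by (auto simp: Un_Diff Compl_eq_Diff_UNIV intro: finite_subset[OF Diff_mono])

lemma Fin_subset_finite_modulo: "Fin \<subseteq> {A. finite (A - M)}"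
  unfolding Fin_def by (simp add: Collect_mono)

lemma finite_modulo_neq_Fin:
  assumes "infinite M"
  shows "{A. finite (A - M)} \<noteq> Fin"
proof -
  have "M \<in> {A. finite (A - M)}" "M \<notin> Fin"
    using assms by (simp_all add: Fin_def)
  then show ?thesis
    by blast
qed

lemma A_I_finite_modulo_subset:
  fixes x :: "nat \<Rightarrow> real"
  assumes "summable (\<lambda>n. \<bar>x n\<bar>)"
  shows "A_I {A. finite (A - M)} x
           \<subseteq> (\<Union>G\<in>{G. finite G}. (+) (sum x G) ` {infsum x B | B. B \<subseteq> M})"
proof
  fix y
  assume "y \<in> A_I {A. finite (A - M)} x"
  then obtain A where A: "finite (A - M)" "y = infsum x A"
    unfolding A_I_def by auto
  then have "y = sum x (A - M) + infsum x (A \<inter> M)"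
    using infsum_split_cofinite[OF assms] by simp
  with A(1) show "y \<in> (\<Union>G\<in>{G. finite G}. (+) (sum x G) ` {infsum x B | B. B \<subseteq> M})"
    by blast
qed

lemma sparse_set_with_negligible_subsums:
  fixes x :: "nat \<Rightarrow> real"
  assumes "summable (\<lambda>n. \<bar>x n\<bar>)"
  obtains M where "infinite M" "infinite (- M)" "negligible (closure {infsum x B | B. B \<subseteq> M})"
proof -
  have "\<forall>k. \<exists>n. \<forall>A \<subseteq> {n..}. \<bar>infsum x A\<bar> \<le> (1/4 :: real) ^ k"
    using small_infsum_beyond[OF assms] by simp
  then obtain N where N: "\<forall>k. \<forall>A \<subseteq> {N k..}. \<bar>infsum x A\<bar> \<le> (1/4 :: real) ^ k"
    by metis
  obtain m where m: "strict_mono m" "\<And>k. N k \<le> m k" "\<And>k. even (m k)"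
    using strict_mono_even_majorant[of N] by blast
  have "negligible (closure {infsum x B | B. B \<subseteq> range m})"
    using assms m(1)
  proof (rule negligible_closure_subsums)
    show "\<bar>infsum x A\<bar> \<le> (1/4) ^ k" if "A \<subseteq> {m k..}" for k A
      using N that m(2)[of k] by (meson atLeast_subset_iff order_trans)
  qed
  moreover have "infinite (range m)"
    using m(1) by (simp add: range_inj_infinite strict_mono_imp_inj_on)
  moreover have "infinite (- range m)"
  proof -
    have "range (\<lambda>n. 2 * n + 1) \<subseteq> - range m"
      using m(3) by (auto, metis dvd_triv_left even_Suc)
    then show ?thesis
      using range_inj_infinite[of "\<lambda>n :: nat. 2 * n + 1"] infinite_super by (auto simp: inj_def)
  qed
  ultimately show thesis
    using that by blast
qed

theorem mainTheorem11:
  fixes x :: "nat \<Rightarrow> real"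
  assumes "x \<in> l1_star"
  shows "\<exists>I. is_ideal I \<and> Fin \<subseteq> I \<and> I \<noteq> Fin \<and> meager (A_I I x) \<and> A_I I x \<in> null_sets lebesgue"
proof -
  have sx: "summable (\<lambda>n. \<bar>x n\<bar>)"
    using assms unfolding l1_star_def by blast
  obtain M where M: "infinite M" "infinite (- M)" "negligible (closure {infsum x B | B. B \<subseteq> M})"
    using sparse_set_with_negligible_subsums[OF sx] by blast
  define F where "F = (\<lambda>G. (+) (sum x G) ` {infsum x B | B. B \<subseteq> M}) ` {G. finite G}"
  define I where "I = {A. finite (A - M)}"
  have "countable F"
    unfolding F_def by (intro countable_image countable_Collect_finite)
  moreover have "A_I I x \<subseteq> \<Union>F"
    using A_I_finite_modulo_subset[OF sx, of M] unfolding F_def I_def by simp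
  moreover have null_closures: "negligible (closure T)" if "T \<in> F" for T
    using that M(3) unfolding F_def by (auto simp: closure_translation intro: negligible_translation)
  ultimately have "meager (A_I I x)" "negligible (A_I I x)"
    using meager_negligible_if_countable_cover by blast+
  moreover have "is_ideal I" "Fin \<subseteq> I" "I \<noteq> Fin"
    unfolding I_def using M(1,2)
    by (simp_all add: is_ideal_finite_modulo Fin_subset_finite_modulo finite_modulo_neq_Fin)
  ultimately show ?thesis
    by (auto simp: negligible_iff_null_sets)
qed

end
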